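(* Let $\rho$ be a state and $\phi$ a pure state not in $\mathcal F$ (of the output space). If there exists a probabilistic resource--non-generating transformation $\rho\to\tau$, where $\tau$ is a state with $F(\tau,\phi)\ge1-\varepsilon$, then $\varepsilon\ge\frac{1-F_{\mathcal F}(\phi)}{\Omega_{\mathcal F}(\rho)}\ge\frac{\lambda_{\min}(\rho)(1-F_{\mathcal F}(\phi))}{R_{\mathcal F}(\rho)}$, where $\lambda_{\min}(\rho)$ is the smallest eigenvalue of $\rho$.
   Context: Finite dimensions; $A\le B$ means $B-A\ge0$. Each space carries a closed convex set $\mathcal F$ of free density operators. $R_{\max}(X\|Y)=\inf\{\lambda:X\le\lambda Y\}$, conventions $\inf\emptyset=\infty$, $0^{-1}=\infty$, $\infty^{-1}=0$. $R_{\mathcal F}(\rho)=\min_{\sigma\in\mathcal F}R_{\max}(\rho\|\sigma)$; $\Omega_{\mathcal F}(\rho)=\inf_{\sigma\in\mathcal F}R_{\max}(\rho\|\sigma)R_{\max}(\sigma\|\rho)$; $F_{\mathcal F}(\phi)=\max_{\sigma\in\mathcal F}\langle\phi|\sigma|\phi\rangle$. Fidelity $F(\rho,\sigma)=\|\sqrt\rho\sqrt\sigma\|_1^2$. $\mathbb O$: completely positive trace-non-increasing maps $\mathcal E$ such that for every free input $\sigma$ there exist a free output $\sigma'$ and $p\in[0,1]$ with $\mathcal E(\sigma)=p\sigma'$. A probabilistic transformation $\rho\to\tau$ exists iff $\tau$ lies in the closure of $\{\mathcal E(\rho)/\mathrm{Tr}\,\mathcal E(\rho):\mathcal E\in\mathbb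 O,\ \mathrm{Tr}\,\mathcal E(\rho)>0\}$. *)

theory Defs
  imports "HOL-Analysis.Analysis"
begin

type_synonym 'n cmat = "complex^'n^'n"

definition cinner :: "complex^('n::finite) \<Rightarrow> complex^('n::finite) \<Rightarrow> complex" where
  "cinner v w = (\<Sum>i\<in>UNIV. cnj (v$i) * w$i)"

definition cscale :: "complex \<Rightarrow> ('n::finite) cmat \<Rightarrow> ('n::finite) cmat" where
  "cscale c A = (\<chi> i j. c * A$i$j)"

definition adj :: "complex^('n::finite)^('m::finite) \<Rightarrow> complex^('m::finite)^('n::finite)" where
  "adj A = (\<chi> i j. cnj (A$j$i))"

definition psd :: "('n::finite) cmat \<Rightarrow> bool" where
  "psd A \<longleftrightarrow> (\<forall>v. Im (cinner v (A *v v)) = 0 \<and> Re (cinner v (A *v v)) \<ge> 0)"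

definition loewner_le :: "('n::finite) cmat \<Rightarrow> ('n::finite) cmat \<Rightarrow> bool" where
  "loewner_le A B \<longleftrightarrow> psd (B - A)"

definition density :: "('n::finite) cmat \<Rightarrow> bool" where
  "density \<rho> \<longleftrightarrow> psd \<rho> \<and> trace \<rho> = 1"

definition proj :: "complex^('n::finite) \<Rightarrow> ('n::finite) cmat" where
  "proj \<phi> = (\<chi> i j. \<phi>$i * cnj (\<phi>$j))"

definition pure_state :: "complex^('n::finite) \<Rightarrow> bool" where
  "pure_state \<phi> \<longleftrightarrow> norm \<phi> = 1"

definition expval :: "complex^('n::finite) \<Rightarrow> ('n::finite) cmat \<Rightarrow> real" where
  "expval \<phi> A = Re (cinner \<phi> (A *v \<phi>))"

definition lambda_min :: "('n::finite) cmat \<Rightarrow> real" where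
  "lambda_min A = Inf {x::real. \<exists>v. v \<noteq> 0 \<and> A *v v = complex_of_real x *s v}"

definition msqrt :: "('n::finite) cmat \<Rightarrow> ('n::finite) cmat" where
  "msqrt A = (THE B. psd B \<and> B ** B = A)"

definition trace_norm :: "('n::finite) cmat \<Rightarrow> real" where
  "trace_norm X = Re (trace (msqrt (adj X ** X)))"

definition fidelity :: "('n::finite) cmat \<Rightarrow> ('n::finite) cmat \<Rightarrow> real" where
  "fidelity \<rho> \<sigma> = (trace_norm (msqrt \<rho> ** msqrt \<sigma>))\<^sup>2"

text \<open>R_max(X||Y) = inf {lambda. X \<le> lambda Y}, with inf of the empty set = \<infinity>.\<close>
definition Rmax :: "('n::finite) cmat \<Rightarrow> ('n::finite) cmat \<Rightarrow> ereal" where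
  "Rmax X Y = Inf (ereal ` {l::real. loewner_le X (l *\<^sub>R Y)})"

definition RF :: "('n::finite) cmat set \<Rightarrow> ('n::finite) cmat \<Rightarrow> ereal" where
  "RF F \<rho> = (INF \<sigma>\<in>F. Rmax \<rho> \<sigma>)"

definition OmegaF :: "('n::finite) cmat set \<Rightarrow> ('n::finite) cmat \<Rightarrow> ereal" where
  "OmegaF F \<rho> = (INF \<sigma>\<in>F. Rmax \<rho> \<sigma> * Rmax \<sigma> \<rho>)"

definition FF :: "('n::finite) cmat set \<Rightarrow> complex^('n::finite) \<Rightarrow> real" where
  "FF F \<phi> = (SUP \<sigma>\<in>F. expval \<phi> \<sigma>)"

definition free_set :: "('n::finite) cmat set \<Rightarrow> bool" where
  "free_set F \<longleftrightarrow> F \<noteq> {} \<and> closed F \<and> convex F \<and> (\<forall>\<sigma>\<in>F. density \<sigma>)"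

definition clinear_map :: "(('n::finite) cmat \<Rightarrow> ('m::finite) cmat) \<Rightarrow> bool" where
  "clinear_map E \<longleftrightarrow> (\<forall>A B. E (A + B) = E A + E B) \<and> (\<forall>c A. E (cscale c A) = cscale c (E A))"

text \<open>A k x k block operator (blocks X i j, i,j < k) on C^k \<otimes> C^n is positive
  semidefinite.\<close>
definition block_psd :: "nat \<Rightarrow> (nat \<Rightarrow> nat \<Rightarrow> ('n::finite) cmat) \<Rightarrow> bool" where
  "block_psd k X \<longleftrightarrow> (\<forall>v :: nat \<Rightarrow> complex^'n.
     Im (\<Sum>i<k. \<Sum>j<k. cinner (v i) (X i j *v v j)) = 0 \<and>
     Re (\<Sum>i<k. \<Sum>j<k. cinner (v i) (X i j *v v j)) \<ge> 0)"

text \<open>Completely positive: linear, and id_k \<otimes> E is positive for every k.\<close>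
definition completely_positive :: "(('n::finite) cmat \<Rightarrow> ('m::finite) cmat) \<Rightarrow> bool" where
  "completely_positive E \<longleftrightarrow> clinear_map E \<and>
     (\<forall>k X. block_psd k X \<longrightarrow> block_psd k (\<lambda>i j. E (X i j)))"

definition trace_nonincreasing :: "(('n::finite) cmat \<Rightarrow> ('m::finite) cmat) \<Rightarrow> bool" where
  "trace_nonincreasing E \<longleftrightarrow> (\<forall>X. psd X \<longrightarrow> Re (trace (E X)) \<le> Re (trace X))"

definition RNG_ops :: "('n::finite) cmat set \<Rightarrow> ('m::finite) cmat set \<Rightarrow> (('n::finite) cmat \<Rightarrow> ('m::finite) cmat) set" where
  "RNG_ops Fin Fout = {E. completely_positive E \<and> trace_nonincreasing E \<and>
     (\<forall>\<sigma>\<in>Fin. \<exists>\<sigma>'\<in>Fout. \<exists>p::real. 0 \<le> p \<and> p \<le> 1 \<and> E \<sigma> = p *\<^sub>R \<sigma>')}"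

definition prob_transform :: "('n::finite) cmat set \<Rightarrow> ('m::finite) cmat set \<Rightarrow> ('n::finite) cmat \<Rightarrow> ('m::finite) cmat \<Rightarrow> bool" where
  "prob_transform Fin Fout \<rho> \<tau> \<longleftrightarrow>
     \<tau> \<in> closure {(1 / Re (trace (E \<rho>))) *\<^sub>R E \<rho> | E.
                    E \<in> RNG_ops Fin Fout \<and> Re (trace (E \<rho>)) > 0}"

end

theory Submission
  imports Defs
begin

text \<open>Suppose \<open>\<rho> \<le> a \<sigma>\<close> and \<open>\<sigma> \<le> b \<rho>\<close> for a free \<open>\<sigma>\<close>, and let \<open>\<E> \<in> \<bbbO>\<close> map \<open>\<sigma>\<close> to \<open>p \<sigma>'\<close>
  with \<open>\<sigma>'\<close> free. Completely positive maps preserve the Loewner order, so \<open>\<E> \<rho> \<le> a p \<sigma>'\<close>,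
  whence \<open>t = Tr \<E> \<rho> \<le> a p\<close>, and \<open>\<E> \<sigma> \<le> b \<E> \<rho>\<close>. Comparing the weights of \<open>\<E> \<sigma>\<close> and \<open>b \<E> \<rho>\<close>
  orthogonal to \<open>\<phi>\<close> gives \<open>p (1 - F\<^sub>\<F>(\<phi>)) \<le> b t (1 - \<langle>\<phi>|\<tau>'|\<phi>\<rangle>)\<close> for the normalised output
  \<open>\<tau>' = \<E> \<rho> / t\<close>, hence \<open>1 - F\<^sub>\<F>(\<phi>) \<le> a b (1 - \<langle>\<phi>|\<tau>'|\<phi>\<rangle>)\<close>. This bound survives taking
  closures; since the fidelity of \<open>\<tau>\<close> with a pure state is \<open>\<langle>\<phi>|\<tau>|\<phi>\<rangle>\<close>, minimising \<open>a b\<close> over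
  \<open>\<sigma>\<close> gives the first inequality. For the second, every state satisfies
  \<open>\<sigma> \<le> \<one> \<le> \<rho> / \<lambda>\<^sub>m\<^sub>i\<^sub>n(\<rho>)\<close>, so \<open>\<Omega>\<^sub>\<F>(\<rho>) \<lambda>\<^sub>m\<^sub>i\<^sub>n(\<rho>) \<le> R\<^sub>\<F>(\<rho>)\<close>.\<close>

lemma cinner_add_right: "cinner v (w1 + w2) = cinner v w1 + cinner v w2"
  by (simp add: cinner_def distrib_left sum.distrib)

lemma cinner_add_left: "cinner (v1 + v2) w = cinner v1 w + cinner v2 w"
  by (simp add: cinner_def distrib_right sum.distrib)

lemma cinner_diff_right: "cinner v (w1 - w2) = cinner v w1 - cinner v w2"
  by (simp add: cinner_def right_diff_distrib sum_subtractf)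

lemma cinner_scale_right: "cinner v (c *s w) = c * cinner v w"
  by (simp add: cinner_def sum_distrib_left mult_ac)

lemma cinner_scale_left: "cinner (c *s v) w = cnj c * cinner v w"
  by (simp add: cinner_def sum_distrib_left mult_ac)

lemma cinner_zero_right [simp]: "cinner v 0 = 0"
  by (simp add: cinner_def)

lemma cinner_zero_left [simp]: "cinner 0 v = 0"
  by (simp add: cinner_def)

lemma cinner_sum_right: "cinner v (\<Sum>i\<in>I. f i) = (\<Sum>i\<in>I. cinner v (f i))"
  by (induction I rule: infinite_finite_induct) (auto simp: cinner_add_right)

lemma cinner_commute: "cinner w v = cnj (cinner v w)"
  by (simp add: cinner_def mult_ac)

lemma Re_cinner: "Re (cinner v w) = inner v w"
  by (simp add: cinner_def inner_vec_def inner_complex_def Re_sum)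

lemma cinner_self: "cinner v v = complex_of_real ((norm v)\<^sup>2)"
proof -
  have "cinner v v = (\<Sum>i\<in>UNIV. complex_of_real ((cmod (v$i))\<^sup>2))"
    unfolding cinner_def
    by (rule sum.cong) (auto simp: complex_norm_square mult.commute simp del: of_real_power)
  also have "\<dots> = complex_of_real ((norm v)\<^sup>2)"
    by (simp add: norm_vec_def L2_set_def sum_nonneg)
  finally show ?thesis .
qed

lemma cinner_axis: "cinner (axis i 1) w = w $ i"
proof -
  have "cinner (axis i 1) w = (\<Sum>k\<in>UNIV. if k = i then w$k else 0)"
    unfolding cinner_def axis_def by (rule sum.cong) auto
  then show ?thesis by simp
qed

lemma scaleR_vec_eq_smult: "c *\<^sub>R (x::complex^'n) = complex_of_real c *s x"
  by (simp add: vec_eq_iff) (simp add: scaleR_conv_of_real)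

lemma cinner_scaleR_right: "cinner v (c *\<^sub>R w) = complex_of_real c * cinner v w"
  by (simp add: scaleR_vec_eq_smult cinner_scale_right)

lemma continuous_on_quadratic_form [continuous_intros]:
  "continuous_on S (\<lambda>w::complex^'n::finite. Re (cinner w (A *v w)))"
  unfolding cinner_def by (intro continuous_intros)

lemma matrix_vector_mult_smult: "(A::'n::finite cmat) *v (c *s x) = c *s (A *v x)"
  by (simp add: matrix_vector_mult_def vec_eq_iff sum_distrib_left mult_ac)

lemma matrix_vector_mult_sum: "(A::'n::finite cmat) *v (\<Sum>i\<in>I. f i) = (\<Sum>i\<in>I. A *v f i)"
  by (induction I rule: infinite_finite_induct) (auto simp: matrix_vector_right_distrib)

lemma sum_matrix_vector_mult: "(\<Sum>i\<in>I. f i) *v (x::complex^'n::finite) = (\<Sum>i\<in>I. f i *v x)"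
  by (induction I rule: infinite_finite_induct) (auto simp: matrix_vector_mult_add_rdistrib)

lemma scaleR_matrix_vector_mult: "(c *\<^sub>R (A::'n::finite cmat)) *v x = complex_of_real c *s (A *v x)"
  unfolding matrix_vector_mult_def
  by (simp add: vec_eq_iff sum_distrib_left) (simp add: scaleR_conv_of_real mult_ac)

lemma mat_matrix_vector_mult: "mat c *v x = c *s (x::complex^'n::finite)"
proof -
  have "(mat c *v x)$i = c * x$i" for i
  proof -
    have "(mat c *v x)$i = (\<Sum>j\<in>UNIV. (if i = j then c else 0) * x$j)"
      by (simp add: matrix_vector_mult_def mat_def)
    also have "\<dots> = (\<Sum>j\<in>UNIV. if j = i then c * x$i else 0)"
      by (rule sum.cong) auto
    finally show ?thesis by simp
  qed
  then show ?thesis by (simp add: vec_eq_iff)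
qed

lemma matrix_vector_mult_diff_mat: "(A - mat c) *v x = A *v x - c *s (x::complex^'n::finite)"
  by (simp add: matrix_vector_mult_diff_rdistrib mat_matrix_vector_mult)

lemma matrix_vector_mult_axis: "(A *v axis j 1) $ i = A $ i $ j"
  by (simp add: matrix_vector_mult_def axis_def if_distrib cong: if_cong)

lemma scaleR_matrix_mult_scaleR:
  "(a *\<^sub>R (A::'n::finite cmat)) ** (b *\<^sub>R (B::'n cmat)) = (a * b) *\<^sub>R (A ** B)"
proof (subst matrix_eq, intro allI)
  fix x
  have "((a *\<^sub>R A) ** (b *\<^sub>R B)) *v x = complex_of_real a *s (A *v (complex_of_real b *s (B *v x)))"
    by (simp only: matrix_vector_mul_assoc[symmetric] scaleR_matrix_vector_mult)
  also have "\<dots> = ((a * b) *\<^sub>R (A ** B)) *v x"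
    by (simp only: scaleR_matrix_vector_mult) (simp add: matrix_vector_mult_smult vector_smult_assoc
        matrix_vector_mul_assoc)
  finally show "((a *\<^sub>R A) ** (b *\<^sub>R B)) *v x = ((a * b) *\<^sub>R (A ** B)) *v x" .
qed

lemma cinner_adj: "cinner v ((A::'n::finite cmat) *v w) = cinner (adj A *v v) w"
  unfolding cinner_def adj_def matrix_vector_mult_def
  by (simp add: sum_distrib_left sum_distrib_right cnj_sum) (subst sum.swap, simp add: mult_ac)

lemma adj_matrix_mult: "adj ((A::'n::finite cmat) ** B) = adj B ** adj A"
  by (simp add: adj_def matrix_matrix_mult_def vec_eq_iff cnj_sum mult.commute)

lemma trace_zero: "trace (0::'n::finite cmat) = 0"
  by (simp add: trace_def)

lemma trace_sum: "trace (\<Sum>i\<in>I. (f i :: 'n::finite cmat)) = (\<Sum>i\<in>I. trace (f i))"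
  by (induction I rule: infinite_finite_induct) (simp_all add: trace_add trace_zero)

lemma trace_scaleR: "trace (c *\<^sub>R (A :: 'n::finite cmat)) = complex_of_real c * trace A"
  by (simp add: trace_def sum_distrib_left) (simp add: scaleR_conv_of_real)

lemma trace_proj: "trace (proj \<phi>) = cinner \<phi> \<phi>"
  by (simp add: trace_def proj_def cinner_def mult.commute)

definition hermitian :: "'n::finite cmat \<Rightarrow> bool" where
  "hermitian A \<longleftrightarrow> adj A = A"

lemma hermitian_cinner_swap: "hermitian A \<Longrightarrow> cinner v (A *v w) = cinner (A *v v) w"
  by (metis cinner_adj hermitian_def)

lemma hermitian_diff: "hermitian A \<Longrightarrow> hermitian B \<Longrightarrow> hermitian (A - B)"
  unfolding hermitian_def adj_def by (simp add: vec_eq_iff)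

lemma hermitian_mat_of_real: "hermitian (mat (complex_of_real m))"
  unfolding hermitian_def adj_def by (simp add: vec_eq_iff mat_def)

lemma psd_imp_hermitian:
  assumes "psd A"
  shows "hermitian A"
proof -
  let ?Q = "\<lambda>v. cinner v (A *v v)"
  have im: "Im (?Q v) = 0" for v
    using assms psd_def by blast
  have Q_add: "?Q (x + c *s y) = ?Q x + c * cinner x (A *v y) + cnj c * cinner y (A *v x)
      + cnj c * c * ?Q y" for x y c
    by (simp add: matrix_vector_right_distrib matrix_vector_mult_smult cinner_add_left
        cinner_add_right cinner_scale_left cinner_scale_right algebra_simps)
  have adj_entry: "A $ j $ i = cnj (A $ i $ j)" for i j
  proof -
    \<comment> \<open>polarisation with the basis vectors \<open>a\<close>, \<open>b\<close> and the phases \<open>1\<close>, \<open>\<i>\<close>\<close>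
    define a where "a = axis i (1::complex)"
    define b where "b = axis j (1::complex)"
    have ab: "cinner a (A *v b) = A$i$j" "cinner b (A *v a) = A$j$i"
      unfolding a_def b_def by (simp_all add: cinner_axis matrix_vector_mult_axis)
    have "Im (?Q (a + 1 *s b)) = Im (?Q a) + Im (A$i$j + A$j$i) + Im (?Q b)"
      by (simp only: Q_add ab) simp
    then have "Im (A$i$j + A$j$i) = 0"
      using im[of "a + 1 *s b"] im[of a] im[of b] by simp
    moreover have "Im (?Q (a + \<i> *s b)) = Im (?Q a) + Re (A$i$j - A$j$i) + Im (?Q b)"
      by (simp only: Q_add ab) simp
    then have "Re (A$i$j - A$j$i) = 0"
      using im[of "a + \<i> *s b"] im[of a] im[of b] by simp
    ultimately show ?thesis by (simp add: complex_eq_iff)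
  qed
  have "cnj (A $ j $ i) = A $ i $ j" for i j
    using adj_entry[of i j] by simp
  then show ?thesis
    unfolding hermitian_def adj_def by (simp add: vec_eq_iff)
qed

lemma psd_quadratic_form_real: "psd A \<Longrightarrow> cinner x (A *v x) = complex_of_real (Re (cinner x (A *v x)))"
  unfolding psd_def by (simp add: complex_eq_iff)

lemma psd_scaleR: "0 \<le> c \<Longrightarrow> psd A \<Longrightarrow> psd (c *\<^sub>R A)"
  unfolding psd_def by (simp add: scaleR_matrix_vector_mult cinner_scale_right)

lemma Re_quadratic_form_add_scaleR:
  assumes "hermitian M"
  shows "Re (cinner (u + t *\<^sub>R w) (M *v (u + t *\<^sub>R w)))
     = Re (cinner u (M *v u)) + 2 * t * Re (cinner w (M *v u)) + t\<^sup>2 * Re (cinner w (M *v w))"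
proof -
  have swap: "cinner u (M *v w) = cnj (cinner w (M *v u))"
    using hermitian_cinner_swap[OF assms] by (metis cinner_commute)
  show ?thesis
    unfolding scaleR_vec_eq_smult
    by (simp add: matrix_vector_right_distrib matrix_vector_mult_smult cinner_add_left
        cinner_add_right cinner_scale_left cinner_scale_right swap power2_eq_square algebra_simps)
qed

lemma nonneg_quadratic_linear_coeff_eq_0:
  fixes a b :: real
  assumes "\<And>t. 0 \<le> a * t + b * t\<^sup>2"
  shows "a = 0"
proof (rule ccontr)
  assume a: "a \<noteq> 0"
  have b: "b \<ge> 0"
    using assms[of 1] assms[of "-1"] by simp
  define t where "t = - a / (b + 1)"
  have t: "t * (b + 1) = - a"
    unfolding t_def using b by (simp add: field_simps)
  have "(b + 1)\<^sup>2 * (a * t + b * t\<^sup>2) = a * (t * (b + 1)) + a * b * (t * (b + 1)) + b * (t * (b + 1))\<^sup>2"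
    by (simp add: algebra_simps power2_eq_square)
  also have "\<dots> = - (a\<^sup>2)"
    using t by (simp add: algebra_simps power2_eq_square)
  finally have "(b + 1)\<^sup>2 * (a * t + b * t\<^sup>2) < 0"
    using a by simp
  then have "a * t + b * t\<^sup>2 < 0"
    using b by (simp add: mult_less_0_iff)
  then show False
    using assms[of t] by simp
qed

text \<open>The quadratic form of \<open>M\<close> along \<open>u + t M u\<close> is nonnegative and vanishes at \<open>t = 0\<close>,
  so its derivative \<open>2 \<parallel>M u\<parallel>\<^sup>2\<close> there vanishes.\<close>

lemma hermitian_nonneg_on_subspace_kernel:
  assumes M: "hermitian M" and W: "subspace W" and u: "u \<in> W" "M *v u \<in> W"
    and nonneg: "\<And>w. w \<in> W \<Longrightarrow> 0 \<le> Re (cinner w (M *v w))"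
    and zero: "Re (cinner u (M *v u)) = 0"
  shows "M *v u = 0"
proof -
  let ?w = "M *v u"
  have "0 \<le> (2 * Re (cinner ?w ?w)) * t + Re (cinner ?w (M *v ?w)) * t\<^sup>2" for t
  proof -
    have "u + t *\<^sub>R ?w \<in> W"
      using W u by (simp add: subspace_add subspace_scale)
    then have "0 \<le> Re (cinner (u + t *\<^sub>R ?w) (M *v (u + t *\<^sub>R ?w)))"
      by (rule nonneg)
    then show ?thesis
      using Re_quadratic_form_add_scaleR[OF M, of u t ?w] zero by (simp add: algebra_simps)
  qed
  then have "2 * Re (cinner ?w ?w) = 0"
    by (rule nonneg_quadratic_linear_coeff_eq_0)
  then show ?thesis
    by (simp add: cinner_self)
qed

lemma psd_quadratic_form_eq_0_imp_kernel:
  assumes "psd M" "Re (cinner v (M *v v)) = 0"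
  shows "M *v v = 0"
  using assms psd_imp_hermitian[OF assms(1)]
  by (intro hermitian_nonneg_on_subspace_kernel[where W = UNIV]) (auto simp: psd_def)

section \<open>The spectral theorem\<close>

lemma quadratic_form_min_on_unit_sphere:
  fixes A :: "'n::finite cmat"
  assumes W: "subspace W" "W \<noteq> {0}"
  shows "\<exists>u\<in>W. norm u = 1 \<and>
    (\<forall>w\<in>W. Re (cinner u (A *v u)) * (norm w)\<^sup>2 \<le> Re (cinner w (A *v w)))"
proof -
  define f where "f = (\<lambda>w. Re (cinner w (A *v w)))"
  let ?S = "W \<inter> sphere 0 1"
  have normalize: "(1 / norm w) *\<^sub>R w \<in> ?S" if "w \<in> W" "w \<noteq> 0" for w
    using W(1) that by (simp add: subspace_scale)
  obtain w0 where "w0 \<in> W" "w0 \<noteq> 0"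
    using W subspace_0 by blast
  then have nonempty: "?S \<noteq> {}"
    using normalize by blast
  have compact: "compact ?S"
    using closed_subspace[OF W(1)] by (intro closed_Int_compact) auto
  have "continuous_on ?S f"
    unfolding f_def by (rule continuous_on_quadratic_form)
  then obtain u where u: "u \<in> ?S" and u_min: "\<And>y. y \<in> ?S \<Longrightarrow> f u \<le> f y"
    using continuous_attains_inf[OF compact nonempty] by blast
  have f_scaleR: "f (c *\<^sub>R w) = c\<^sup>2 * f w" for c w
    unfolding f_def scaleR_vec_eq_smult
    by (simp add: matrix_vector_mult_smult cinner_scale_left cinner_scale_right
        power2_eq_square mult.assoc)
  have "f u * (norm w)\<^sup>2 \<le> f w" if "w \<in> W" for w
  proof (cases "w = 0")
    case True
    then show ?thesis unfolding f_def by simp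
  next
    case False
    have "f u \<le> f ((1 / norm w) *\<^sub>R w)"
      using u_min normalize[OF that False] by blast
    also have "\<dots> = f w / (norm w)\<^sup>2"
      by (simp add: f_scaleR power_divide)
    finally show ?thesis
      using False by (simp add: field_simps)
  qed
  then show ?thesis
    using u unfolding f_def by auto
qed

text \<open>The minimum \<open>m\<close> of the quadratic form on the unit sphere of \<open>W\<close> is an eigenvalue:
  \<open>A - m\<close> is nonnegative on \<open>W\<close> and vanishes at the minimiser.\<close>

lemma hermitian_invariant_subspace_has_eigenvector:
  assumes A: "hermitian A" and W: "subspace W" "W \<noteq> {0}"
    and invariant: "\<And>w. w \<in> W \<Longrightarrow> A *v w \<in> W"
  shows "\<exists>u\<in>W. norm u = 1 \<and> (\<exists>m. A *v u = complex_of_real m *s u)"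
proof -
  obtain u where u: "u \<in> W" "norm u = 1"
    and u_min: "\<And>w. w \<in> W \<Longrightarrow> Re (cinner u (A *v u)) * (norm w)\<^sup>2 \<le> Re (cinner w (A *v w))"
    using quadratic_form_min_on_unit_sphere[OF W] by blast
  define m where "m = Re (cinner u (A *v u))"
  define M where "M = A - mat (complex_of_real m)"
  have M_form: "Re (cinner w (M *v w)) = Re (cinner w (A *v w)) - m * (norm w)\<^sup>2" for w
    unfolding M_def by (simp add: matrix_vector_mult_diff_mat cinner_diff_right cinner_scale_right cinner_self)
  have "M *v u \<in> W"
    unfolding M_def matrix_vector_mult_diff_mat scaleR_vec_eq_smult[symmetric]
    using W(1) u invariant by (simp add: subspace_diff subspace_scale)
  moreover have "hermitian M"
    unfolding M_def by (rule hermitian_diff[OF A hermitian_mat_of_real])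
  ultimately have "M *v u = 0"
    using W(1) u u_min by (intro hermitian_nonneg_on_subspace_kernel[where W = W]) (auto simp: M_form m_def)
  then show ?thesis
    using u unfolding M_def matrix_vector_mult_diff_mat by auto
qed

definition orthonormal :: "nat \<Rightarrow> (nat \<Rightarrow> complex^'n::finite) \<Rightarrow> bool" where
  "orthonormal k v \<longleftrightarrow> (\<forall>i<k. \<forall>j<k. cinner (v i) (v j) = (if i = j then 1 else 0))"

definition orthonormal_basis :: "nat \<Rightarrow> (nat \<Rightarrow> complex^'n::finite) \<Rightarrow> bool" where
  "orthonormal_basis k v \<longleftrightarrow> orthonormal k v \<and> (\<forall>x. x = (\<Sum>i<k. cinner (v i) x *s v i))"

definition spectral_sum :: "nat \<Rightarrow> (nat \<Rightarrow> complex^'n::finite) \<Rightarrow> (nat \<Rightarrow> real) \<Rightarrow> 'n cmat" where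
  "spectral_sum k v \<mu> = (\<Sum>i<k. \<mu> i *\<^sub>R proj (v i))"

lemma orthonormal_basis_orthonormal: "orthonormal_basis k v \<Longrightarrow> orthonormal k v"
  unfolding orthonormal_basis_def by simp

lemma orthonormal_coeff:
  assumes "orthonormal k v" "j < k"
  shows "cinner (v j) (\<Sum>i<k. a i *s v i) = a j"
proof -
  have "cinner (v j) (\<Sum>i<k. a i *s v i) = (\<Sum>i<k. a i * cinner (v j) (v i))"
    by (simp add: cinner_sum_right cinner_scale_right)
  also have "\<dots> = (\<Sum>i<k. if i = j then a j else 0)"
    using assms unfolding orthonormal_def by (intro sum.cong) auto
  finally show ?thesis
    using assms(2) by simp
qed

lemma orthonormal_length_le_DIM:
  assumes "orthonormal k (v :: nat \<Rightarrow> complex^'n::finite)"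
  shows "k \<le> DIM(complex^'n)"
proof -
  have unit: "cinner (v i) (v i) = 1" if "i < k" for i
    using assms that unfolding orthonormal_def by auto
  have "inj_on v {..<k}"
    by (rule inj_onI) (metis assms lessThan_iff orthonormal_def unit zero_neq_one)
  moreover have "independent (v ` {..<k})"
  proof (rule pairwise_orthogonal_independent)
    show "pairwise orthogonal (v ` {..<k})"
      using assms unfolding pairwise_def orthogonal_def orthonormal_def
      by (auto simp: Re_cinner[symmetric])
    show "0 \<notin> v ` {..<k}"
      using unit by fastforce
  qed
  ultimately show ?thesis
    using independent_bound card_image by fastforce
qed

lemma orthonormal_extend:
  assumes "orthonormal k v" "\<forall>i<k. cinner (v i) u = 0" "norm u = 1"
  shows "orthonormal (Suc k) (v(k := u))"
  using assms unfolding orthonormal_def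
  by (auto simp: less_Suc_eq cinner_self cinner_commute[of u])

lemma orthonormal_basisI:
  assumes v: "orthonormal k v" and complete: "\<And>w. \<forall>i<k. cinner (v i) w = 0 \<Longrightarrow> w = 0"
  shows "orthonormal_basis k v"
proof -
  have "x - (\<Sum>i<k. cinner (v i) x *s v i) = 0" for x
    using orthonormal_coeff[OF v] by (intro complete) (simp add: cinner_diff_right)
  then show ?thesis
    using v unfolding orthonormal_basis_def by simp
qed

lemma subspace_orthogonal_complement: "subspace {w. \<forall>i<k. cinner (v i) w = 0}"
  unfolding subspace_def by (simp add: cinner_add_right cinner_scaleR_right)

lemma proj_matrix_vector_mult: "proj \<phi> *v x = cinner \<phi> x *s \<phi>"
  by (simp add: proj_def matrix_vector_mult_def cinner_def vec_eq_iff sum_distrib_left mult_ac)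

lemma spectral_sum_matrix_vector_mult:
  "spectral_sum k v \<mu> *v x = (\<Sum>i<k. (complex_of_real (\<mu> i) * cinner (v i) x) *s v i)"
  by (simp add: spectral_sum_def sum_matrix_vector_mult scaleR_matrix_vector_mult
      proj_matrix_vector_mult vector_smult_assoc)

lemma hermitian_orthogonal_complement_invariant:
  assumes A: "hermitian A" and eigen: "\<And>i. i < k \<Longrightarrow> A *v v i = complex_of_real (\<mu> i) *s v i"
    and w: "\<forall>i<k. cinner (v i) w = 0"
  shows "\<forall>i<k. cinner (v i) (A *v w) = 0"
proof (intro allI impI)
  fix i assume i: "i < k"
  have "cinner (v i) (A *v w) = cinner (A *v v i) w"
    by (rule hermitian_cinner_swap[OF A])
  also have "\<dots> = 0"
    using eigen[OF i] w i by (simp add: cinner_scale_left)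
  finally show "cinner (v i) (A *v w) = 0" .
qed

lemma eigenbasis_spectral_sum:
  assumes basis: "orthonormal_basis k v"
    and eigen: "\<And>i. i < k \<Longrightarrow> A *v v i = complex_of_real (\<mu> i) *s v i"
  shows "A = spectral_sum k v \<mu>"
proof (subst matrix_eq, intro allI)
  fix x
  have "A *v x = A *v (\<Sum>i<k. cinner (v i) x *s v i)"
    using basis unfolding orthonormal_basis_def by metis
  also have "\<dots> = spectral_sum k v \<mu> *v x"
    unfolding spectral_sum_matrix_vector_mult
    by (simp add: matrix_vector_mult_sum matrix_vector_mult_smult eigen vector_smult_assoc mult.commute)
  finally show "A *v x = spectral_sum k v \<mu> *v x" .
qed

theorem hermitian_spectral_decomposition:
  fixes A :: "'n::finite cmat"
  assumes A: "hermitian A"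
  shows "\<exists>k v \<mu>. orthonormal_basis k v \<and> A = spectral_sum k v \<mu>"
proof -
  define eigenfamily where
    "eigenfamily k \<longleftrightarrow> (\<exists>v \<mu>. orthonormal k v \<and> (\<forall>i<k. A *v v i = complex_of_real (\<mu> i) *s v i))"
    for k
  have "eigenfamily 0"
    unfolding eigenfamily_def orthonormal_def by auto
  then obtain k where "eigenfamily k" and maximal: "\<And>l. eigenfamily l \<Longrightarrow> l \<le> k"
    using Nat.ex_has_greatest_nat[of eigenfamily 0 "DIM(complex^'n)"] orthonormal_length_le_DIM
    unfolding eigenfamily_def by blast
  then obtain v \<mu> where v: "orthonormal k v"
    and eigen: "\<And>i. i < k \<Longrightarrow> A *v v i = complex_of_real (\<mu> i) *s v i"
    unfolding eigenfamily_def by blast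
  let ?W = "{w. \<forall>i<k. cinner (v i) w = 0}"
  have invariant: "A *v w \<in> ?W" if "w \<in> ?W" for w
    using hermitian_orthogonal_complement_invariant[OF A, of k v \<mu> w] eigen that by simp
  have "w = 0" if "w \<in> ?W" for w
  proof (rule ccontr)
    assume "w \<noteq> 0"
    with that have "?W \<noteq> {0}"
      by blast
    then obtain u m where u: "u \<in> ?W" "norm u = 1" "A *v u = complex_of_real m *s u"
      using hermitian_invariant_subspace_has_eigenvector[OF A subspace_orthogonal_complement _ invariant]
      by blast
    then have "eigenfamily (Suc k)"
      unfolding eigenfamily_def using orthonormal_extend[OF v] eigen
      by (intro exI[of _ "v(k := u)"] exI[of _ "\<mu>(k := m)"]) (auto simp: less_Suc_eq)
    then show False
      using maximal by fastforce
  qed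
  then have "orthonormal_basis k v"
    by (intro orthonormal_basisI[OF v]) auto
  then show ?thesis
    using eigenbasis_spectral_sum eigen by blast
qed

lemma spectral_sum_coeff:
  "orthonormal k v \<Longrightarrow> j < k \<Longrightarrow>
    cinner (v j) (spectral_sum k v \<mu> *v x) = complex_of_real (\<mu> j) * cinner (v j) x"
  unfolding spectral_sum_matrix_vector_mult by (rule orthonormal_coeff)

lemma spectral_sum_eigenvector:
  assumes "orthonormal k v" "j < k"
  shows "spectral_sum k v \<mu> *v v j = complex_of_real (\<mu> j) *s v j"
proof -
  have "spectral_sum k v \<mu> *v v j = (\<Sum>i<k. if i = j then complex_of_real (\<mu> j) *s v j else 0)"
    unfolding spectral_sum_matrix_vector_mult
    using assms unfolding orthonormal_def by (intro sum.cong) auto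
  then show ?thesis
    using assms(2) by simp
qed

lemma spectral_sum_mult:
  assumes "orthonormal k v"
  shows "spectral_sum k v \<mu> ** spectral_sum k v \<nu> = spectral_sum k v (\<lambda>i. \<mu> i * \<nu> i)"
proof (subst matrix_eq, intro allI)
  fix x
  have "spectral_sum k v \<mu> *v (spectral_sum k v \<nu> *v x)
      = (\<Sum>i<k. (complex_of_real (\<mu> i) * (complex_of_real (\<nu> i) * cinner (v i) x)) *s v i)"
    unfolding spectral_sum_matrix_vector_mult[of k v \<mu>]
    using spectral_sum_coeff[OF assms] by (intro sum.cong) auto
  also have "\<dots> = spectral_sum k v (\<lambda>i. \<mu> i * \<nu> i) *v x"
    unfolding spectral_sum_matrix_vector_mult by (simp add: mult.assoc)
  finally show "(spectral_sum k v \<mu> ** spectral_sum k v \<nu>) *v x = spectral_sum k v (\<lambda>i. \<mu> i * \<nu> i) *v x"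
    by (simp add: matrix_vector_mul_assoc)
qed

lemma spectral_sum_quadratic_form:
  "cinner x (spectral_sum k v \<mu> *v x) = (\<Sum>i<k. complex_of_real (\<mu> i * (cmod (cinner (v i) x))\<^sup>2))"
  unfolding spectral_sum_matrix_vector_mult
  by (simp add: cinner_sum_right cinner_scale_right cinner_commute[of x] mult.assoc
      complex_norm_square[symmetric])

lemma spectral_sum_trace:
  "orthonormal k v \<Longrightarrow> trace (spectral_sum k v \<mu>) = complex_of_real (\<Sum>i<k. \<mu> i)"
  unfolding spectral_sum_def orthonormal_def
  by (simp add: trace_sum trace_scaleR trace_proj)

lemma spectral_sum_psd: "(\<And>i. i < k \<Longrightarrow> 0 \<le> \<mu> i) \<Longrightarrow> psd (spectral_sum k v \<mu>)"
  unfolding psd_def spectral_sum_quadratic_form by (auto simp: Re_sum Im_sum intro!: sum_nonneg)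

lemma orthonormal_basis_parseval:
  assumes "orthonormal_basis k v"
  shows "(norm x)\<^sup>2 = (\<Sum>i<k. (cmod (cinner (v i) x))\<^sup>2)"
proof -
  have "spectral_sum k v (\<lambda>_. 1) *v x = x"
    using assms unfolding spectral_sum_matrix_vector_mult orthonormal_basis_def by simp
  then have "complex_of_real ((norm x)\<^sup>2) = cinner x (spectral_sum k v (\<lambda>_. 1) *v x)"
    by (simp add: cinner_self)
  also have "\<dots> = complex_of_real (\<Sum>i<k. (cmod (cinner (v i) x))\<^sup>2)"
    by (simp add: spectral_sum_quadratic_form)
  finally show ?thesis
    by (simp only: of_real_eq_iff)
qed

lemma psd_spectral_decomposition:
  assumes "psd A"
  obtains k v \<mu> where "orthonormal_basis k v" "A = spectral_sum k v \<mu>" "\<And>i. i < k \<Longrightarrow> 0 \<le> \<mu> i"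
proof -
  obtain k v \<mu> where basis: "orthonormal_basis k v" and A: "A = spectral_sum k v \<mu>"
    using hermitian_spectral_decomposition[OF psd_imp_hermitian[OF assms]] by metis
  have nonneg: "0 \<le> \<mu> i" if "i < k" for i
  proof -
    have v: "orthonormal k v"
      using basis by (rule orthonormal_basis_orthonormal)
    then have "cinner (v i) (A *v v i) = complex_of_real (\<mu> i)"
      using that unfolding A orthonormal_def
      by (simp add: spectral_sum_eigenvector[OF v that] cinner_scale_right)
    then show ?thesis
      using assms unfolding psd_def by (metis Re_complex_of_real)
  qed
  show thesis
    using basis A nonneg by (rule that)
qed

lemma psd_sqrt_exists:
  assumes "psd A"
  shows "\<exists>B. psd B \<and> B ** B = A"
proof -
  obtain k v \<mu> where basis: "orthonormal_basis k v" and A: "A = spectral_sum k v \<mu>"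
    and nonneg: "\<And>i. i < k \<Longrightarrow> 0 \<le> \<mu> i"
    using psd_spectral_decomposition[OF assms] by metis
  let ?B = "spectral_sum k v (\<lambda>i. sqrt (\<mu> i))"
  have "psd ?B"
    by (rule spectral_sum_psd) (simp add: nonneg)
  moreover have "?B ** ?B = A"
  proof -
    have "orthonormal k v"
      using basis by (rule orthonormal_basis_orthonormal)
    then have "?B ** ?B = spectral_sum k v (\<lambda>i. sqrt (\<mu> i) * sqrt (\<mu> i))"
      by (rule spectral_sum_mult)
    also have "\<dots> = A"
      unfolding A spectral_sum_def by (intro sum.cong) (simp_all add: nonneg)
    finally show ?thesis .
  qed
  ultimately show ?thesis by blast
qed

text \<open>\<open>\<mu> (\<langle>u|C|u\<rangle> + \<langle>u|D|u\<rangle>) = \<langle>u|C\<^sup>2 - D\<^sup>2|u\<rangle> = 0\<close>, and for \<open>\<mu> \<noteq> 0\<close> positivity forces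
  \<open>C u = D u = 0\<close>.\<close>

lemma psd_sqrt_diff_eigenvalue_eq_0:
  assumes C: "psd C" and D: "psd D" and eq: "C ** C = D ** D"
    and u: "cinner u u = 1" and eigen: "(C - D) *v u = complex_of_real \<mu> *s u"
  shows "\<mu> = 0"
proof (rule ccontr)
  assume \<mu>: "\<mu> \<noteq> 0"
  define X where "X = C - D"
  have hX: "hermitian X"
    unfolding X_def using hermitian_diff psd_imp_hermitian C D by blast
  have Xu: "X *v u = complex_of_real \<mu> *s u"
    using eigen unfolding X_def .
  have "C *v (X *v u) + X *v (D *v u) = (C ** C) *v u - (D ** D) *v u"
    unfolding X_def
    by (simp add: matrix_vector_mult_diff_rdistrib matrix_vector_mult_diff_distrib
        matrix_vector_mul_assoc[symmetric])
  then have "cinner u (C *v (X *v u)) + cinner u (X *v (D *v u)) = 0"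
    using eq by (simp add: cinner_add_right[symmetric])
  then have "complex_of_real \<mu> * (cinner u (C *v u) + cinner u (D *v u)) = 0"
    by (simp add: hermitian_cinner_swap[OF hX, of u] Xu matrix_vector_mult_smult
        cinner_scale_left cinner_scale_right distrib_left)
  then have "cinner u (C *v u) + cinner u (D *v u) = 0"
    using \<mu> by simp
  moreover have "Re (cinner u (C *v u)) \<ge> 0" "Re (cinner u (D *v u)) \<ge> 0"
    using C D unfolding psd_def by auto
  ultimately have "Re (cinner u (C *v u)) = 0" "Re (cinner u (D *v u)) = 0"
    by (smt (verit) plus_complex.sel(1) zero_complex.sel(1))+
  then have "C *v u = 0" "D *v u = 0"
    using psd_quadratic_form_eq_0_imp_kernel C D by auto
  then have "X *v u = 0"
    unfolding X_def by (simp add: matrix_vector_mult_diff_rdistrib)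
  then have "cinner u (X *v u) = 0"
    by simp
  then show False
    using Xu u \<mu> by (simp add: cinner_scale_right)
qed

lemma psd_sqrt_unique:
  assumes C: "psd C" and D: "psd D" and eq: "C ** C = D ** D"
  shows "C = D"
proof -
  obtain k v \<mu> where basis: "orthonormal_basis k v" and CD: "C - D = spectral_sum k v \<mu>"
    using hermitian_spectral_decomposition[OF hermitian_diff[OF C[THEN psd_imp_hermitian] D[THEN psd_imp_hermitian]]]
    by metis
  have v: "orthonormal k v"
    using basis by (rule orthonormal_basis_orthonormal)
  have "\<mu> i = 0" if i: "i < k" for i
    using v i CD spectral_sum_eigenvector[OF v i] unfolding orthonormal_def
    by (intro psd_sqrt_diff_eigenvalue_eq_0[OF C D eq]) auto
  then have "C - D = 0"
    unfolding CD spectral_sum_def by simp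
  then show ?thesis
    by simp
qed

lemma msqrt_unique: "psd A \<Longrightarrow> psd B \<Longrightarrow> B ** B = A \<Longrightarrow> msqrt A = B"
  unfolding msqrt_def by (rule the_equality) (auto intro: psd_sqrt_unique)

lemma
  assumes "psd A"
  shows psd_msqrt: "psd (msqrt A)" and msqrt_mult_self: "msqrt A ** msqrt A = A"
proof -
  obtain B where B: "psd B" "B ** B = A"
    using psd_sqrt_exists[OF assms] by blast
  then have "msqrt A = B"
    by (intro msqrt_unique[OF assms])
  then show "psd (msqrt A)" "msqrt A ** msqrt A = A"
    using B by simp_all
qed

lemma psd_trace_nonneg: "psd X \<Longrightarrow> 0 \<le> Re (trace X)"
  by (erule psd_spectral_decomposition)
    (auto simp: orthonormal_basis_orthonormal spectral_sum_trace intro!: sum_nonneg)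

lemma psd_quadratic_form_le_trace:
  assumes "psd X"
  shows "Re (cinner x (X *v x)) \<le> Re (trace X) * (norm x)\<^sup>2"
proof -
  obtain k v \<mu> where basis: "orthonormal_basis k v" and X: "X = spectral_sum k v \<mu>"
    and nonneg: "\<And>i. i < k \<Longrightarrow> 0 \<le> \<mu> i"
    using psd_spectral_decomposition[OF assms] by metis
  have coeff_le: "(cmod (cinner (v i) x))\<^sup>2 \<le> (norm x)\<^sup>2" if "i < k" for i
    unfolding orthonormal_basis_parseval[OF basis, of x] using that by (intro member_le_sum) auto
  have "Re (cinner x (X *v x)) = (\<Sum>i<k. \<mu> i * (cmod (cinner (v i) x))\<^sup>2)"
    unfolding X spectral_sum_quadratic_form by (simp add: Re_sum)
  also have "\<dots> \<le> (\<Sum>i<k. \<mu> i * (norm x)\<^sup>2)"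
    using nonneg coeff_le by (intro sum_mono mult_left_mono) auto
  also have "\<dots> = Re (trace X) * (norm x)\<^sup>2"
    using orthonormal_basis_orthonormal[OF basis] unfolding X
    by (simp add: spectral_sum_trace sum_distrib_right)
  finally show ?thesis .
qed

lemma lambda_min_le_eigenvalue:
  assumes A: "psd A" and v: "v \<noteq> 0" "A *v v = complex_of_real x *s v"
  shows "lambda_min A \<le> x"
  unfolding lambda_min_def
proof (rule cInf_lower)
  show "x \<in> {x. \<exists>v. v \<noteq> 0 \<and> A *v v = complex_of_real x *s v}"
    using v by blast
  show "bdd_below {x::real. \<exists>v. v \<noteq> 0 \<and> A *v v = complex_of_real x *s v}"
  proof (rule bdd_belowI)
    fix y assume "y \<in> {x. \<exists>v. v \<noteq> 0 \<and> A *v v = complex_of_real x *s v}"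
    then obtain w where w: "w \<noteq> 0" "A *v w = complex_of_real y *s w"
      by blast
    then have "y * (norm w)\<^sup>2 = Re (cinner w (A *v w))"
      by (simp add: cinner_scale_right cinner_self)
    also have "\<dots> \<ge> 0"
      using A psd_def by blast
    finally show "0 \<le> y"
      using w by (simp add: zero_le_mult_iff)
  qed
qed

lemma lambda_min_quadratic_form_le:
  assumes "psd A"
  shows "lambda_min A * (norm x)\<^sup>2 \<le> Re (cinner x (A *v x))"
proof -
  obtain k v \<mu> where basis: "orthonormal_basis k v" and A: "A = spectral_sum k v \<mu>"
    using hermitian_spectral_decomposition[OF psd_imp_hermitian[OF assms]] by metis
  have v: "orthonormal k v"
    using basis by (rule orthonormal_basis_orthonormal)
  have le: "lambda_min A \<le> \<mu> i" if "i < k" for i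
  proof (rule lambda_min_le_eigenvalue[OF assms])
    show "v i \<noteq> 0"
      using v that unfolding orthonormal_def by (metis cinner_zero_left zero_neq_one)
    show "A *v v i = complex_of_real (\<mu> i) *s v i"
      unfolding A by (rule spectral_sum_eigenvector[OF v that])
  qed
  have "lambda_min A * (norm x)\<^sup>2 = (\<Sum>i<k. lambda_min A * (cmod (cinner (v i) x))\<^sup>2)"
    unfolding orthonormal_basis_parseval[OF basis, of x] by (simp add: sum_distrib_left)
  also have "\<dots> \<le> (\<Sum>i<k. \<mu> i * (cmod (cinner (v i) x))\<^sup>2)"
    using le by (intro sum_mono mult_right_mono) auto
  also have "\<dots> = Re (cinner x (A *v x))"
    unfolding A spectral_sum_quadratic_form by (simp add: Re_sum)
  finally show ?thesis .
qed

section \<open>Pure states and fidelity\<close>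

lemma psd_proj: "psd (proj \<phi>)"
proof -
  have "cinner x (proj \<phi> *v x) = complex_of_real ((cmod (cinner \<phi> x))\<^sup>2)" for x
    by (simp add: proj_matrix_vector_mult cinner_scale_right cinner_commute[of x \<phi>]
        complex_norm_square del: of_real_power)
  then show ?thesis
    unfolding psd_def by simp
qed

lemma pure_state_cinner_self: "pure_state \<phi> \<Longrightarrow> cinner \<phi> \<phi> = 1"
  unfolding pure_state_def by (simp add: cinner_self)

lemma proj_mult_self: "pure_state \<phi> \<Longrightarrow> proj \<phi> ** proj \<phi> = proj \<phi>"
  by (simp add: matrix_eq matrix_vector_mul_assoc[symmetric] proj_matrix_vector_mult
      matrix_vector_mult_smult cinner_scale_right pure_state_cinner_self vector_smult_assoc)

text \<open>With \<open>S = \<surd>\<tau>\<close> and \<open>P = |\<phi>\<rangle>\<langle>\<phi>|\<close> one has \<open>(S P)\<^sup>\<dagger> (S P) = P \<tau> P = \<langle>\<phi>|\<tau>|\<phi>\<rangle> P\<close>, whose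
  square root \<open>\<surd>\<langle>\<phi>|\<tau>|\<phi>\<rangle> P\<close> has trace \<open>\<surd>\<langle>\<phi>|\<tau>|\<phi>\<rangle>\<close>.\<close>

lemma fidelity_proj:
  assumes \<tau>: "psd \<tau>" and \<phi>: "pure_state \<phi>"
  shows "fidelity \<tau> (proj \<phi>) = expval \<phi> \<tau>"
proof -
  let ?P = "proj \<phi>"
  define S where "S = msqrt \<tau>"
  define r where "r = expval \<phi> \<tau>"
  have r: "0 \<le> r" "cinner \<phi> (\<tau> *v \<phi>) = complex_of_real r"
    unfolding r_def expval_def using \<tau> psd_quadratic_form_real psd_def by auto
  have msqrt_P: "msqrt ?P = ?P"
    by (rule msqrt_unique[OF psd_proj psd_proj proj_mult_self[OF \<phi>]])
  have adj_S: "adj S = S" and adj_P: "adj ?P = ?P"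
    using psd_imp_hermitian[OF psd_msqrt[OF \<tau>]] psd_imp_hermitian[OF psd_proj]
    unfolding S_def hermitian_def by auto
  have SS: "S ** S = \<tau>"
    unfolding S_def by (rule msqrt_mult_self[OF \<tau>])
  have "adj (S ** ?P) ** (S ** ?P) = ?P ** (S ** S) ** ?P"
    unfolding adj_matrix_mult adj_S adj_P by (simp add: matrix_mul_assoc)
  also have "\<dots> = r *\<^sub>R ?P"
    unfolding SS by (simp add: matrix_eq matrix_vector_mul_assoc[symmetric] proj_matrix_vector_mult
        matrix_vector_mult_smult cinner_scale_right r scaleR_matrix_vector_mult
        vector_smult_assoc mult.commute)
  finally have SP: "adj (S ** ?P) ** (S ** ?P) = r *\<^sub>R ?P" .
  have "msqrt (r *\<^sub>R ?P) = sqrt r *\<^sub>R ?P"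
    using r(1) by (intro msqrt_unique psd_scaleR psd_proj)
      (simp_all add: scaleR_matrix_mult_scaleR proj_mult_self[OF \<phi>])
  then have "trace_norm (msqrt \<tau> ** msqrt ?P) = sqrt r"
    unfolding trace_norm_def msqrt_P S_def[symmetric] SP
    by (simp add: trace_scaleR trace_proj pure_state_cinner_self[OF \<phi>])
  then show ?thesis
    unfolding fidelity_def r_def using r(1) r_def by simp
qed

section \<open>Completely positive maps and the Loewner order\<close>

lemma completely_positive_add: "completely_positive E \<Longrightarrow> E (A + B) = E A + E B"
  unfolding completely_positive_def clinear_map_def by blast

lemma completely_positive_diff: "completely_positive E \<Longrightarrow> E (A - B) = E A - E B"
  by (metis add_diff_cancel completely_positive_add diff_add_cancel)

lemma completely_positive_scaleR:
  assumes "completely_positive E"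
  shows "E (r *\<^sub>R A) = r *\<^sub>R E A"
proof -
  have "r *\<^sub>R A = cscale (complex_of_real r) A" for A :: "'n::finite cmat"
    by (simp add: cscale_def vec_eq_iff) (simp add: scaleR_conv_of_real)
  then show ?thesis
    using assms unfolding completely_positive_def clinear_map_def by metis
qed

lemma completely_positive_psd:
  assumes E: "completely_positive E" and A: "psd A"
  shows "psd (E A)"
proof -
  have one: "{..<1::nat} = {0}" by auto
  have "block_psd 1 (\<lambda>i j. A)"
    unfolding block_psd_def one using A unfolding psd_def by simp
  then have "block_psd 1 (\<lambda>i j. E A)"
    using E completely_positive_def by blast
  then show ?thesis
    unfolding block_psd_def psd_def one by (auto dest: spec[of _ "\<lambda>_. _"])
qed

lemma completely_positive_loewner_mono:
  "completely_positive E \<Longrightarrow> loewner_le A B \<Longrightarrow> loewner_le (E A) (E B)"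
  unfolding loewner_le_def by (metis completely_positive_diff completely_positive_psd)

lemma loewner_le_trace: "loewner_le A B \<Longrightarrow> Re (trace A) \<le> Re (trace B)"
  unfolding loewner_le_def using psd_trace_nonneg[of "B - A"] by (simp add: trace_sub)

lemma loewner_le_scaleR_iff:
  "loewner_le X (l *\<^sub>R Y) \<longleftrightarrow> (\<forall>v. l * Im (cinner v (Y *v v)) - Im (cinner v (X *v v)) = 0
      \<and> 0 \<le> l * Re (cinner v (Y *v v)) - Re (cinner v (X *v v)))"
  unfolding loewner_le_def psd_def
  by (simp add: matrix_vector_mult_diff_rdistrib cinner_diff_right scaleR_matrix_vector_mult
      cinner_scale_right)

lemma closed_loewner_le_scaleR: "closed {l. loewner_le X (l *\<^sub>R Y)}"
  unfolding loewner_le_scaleR_iff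
  by (intro closed_Collect_all closed_Collect_conj closed_Collect_eq closed_Collect_le
      continuous_intros)

lemma expval_diff: "expval \<phi> (A - B) = expval \<phi> A - expval \<phi> B"
  unfolding expval_def by (simp add: matrix_vector_mult_diff_rdistrib cinner_diff_right)

lemma expval_scaleR: "expval \<phi> (c *\<^sub>R A) = c * expval \<phi> A"
  unfolding expval_def by (simp add: scaleR_matrix_vector_mult cinner_scale_right)

lemma continuous_on_expval: "continuous_on S (\<lambda>X. expval \<phi> X)"
  unfolding expval_def cinner_def matrix_vector_mult_def by (intro continuous_intros)

definition perp_weight :: "complex^'n::finite \<Rightarrow> 'n cmat \<Rightarrow> real" where
  "perp_weight \<phi> X = Re (trace X) - expval \<phi> X"

lemma perp_weight_nonneg: "pure_state \<phi> \<Longrightarrow> psd X \<Longrightarrow> 0 \<le> perp_weight \<phi> X"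
  unfolding perp_weight_def expval_def pure_state_def
  using psd_quadratic_form_le_trace[of X \<phi>] by simp

lemma perp_weight_scaleR: "perp_weight \<phi> (c *\<^sub>R A) = c * perp_weight \<phi> A"
  unfolding perp_weight_def by (simp add: expval_scaleR trace_scaleR algebra_simps)

lemma perp_weight_mono: "pure_state \<phi> \<Longrightarrow> loewner_le A B \<Longrightarrow> perp_weight \<phi> A \<le> perp_weight \<phi> B"
  unfolding loewner_le_def using perp_weight_nonneg[of \<phi> "B - A"]
  by (simp add: perp_weight_def expval_diff trace_sub)

lemma expval_le_1: "pure_state \<phi> \<Longrightarrow> density X \<Longrightarrow> expval \<phi> X \<le> 1"
  using perp_weight_nonneg[of \<phi> X] unfolding perp_weight_def density_def by simp

lemma expval_le_FF:
  assumes "free_set F" "pure_state \<phi>" "\<sigma> \<in> F"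
  shows "expval \<phi> \<sigma> \<le> FF F \<phi>"
  unfolding FF_def
  using assms expval_le_1 unfolding free_set_def by (intro cSUP_upper bdd_aboveI[of _ 1]) auto

lemma FF_le_1: "free_set F \<Longrightarrow> pure_state \<phi> \<Longrightarrow> FF F \<phi> \<le> 1"
  unfolding FF_def free_set_def using expval_le_1 by (intro cSUP_least) auto

section \<open>Max-relative entropy ratios\<close>

lemma ereal_one_le_mult: "1 \<le> x \<Longrightarrow> 1 \<le> y \<Longrightarrow> (1::ereal) \<le> x * y"
  by (cases x; cases y) (auto intro: order_trans[OF _ mult_right_mono[of 1]])

lemma ereal_divide_INF_le:
  fixes f :: "'a \<Rightarrow> ereal" and G c :: real
  assumes pos: "0 < (INF x\<in>A. f x)" and c: "0 \<le> c"
    and bound: "\<And>x r. x \<in> A \<Longrightarrow> f x = ereal r \<Longrightarrow> G \<le> r * c"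
  shows "ereal G / (INF x\<in>A. f x) \<le> ereal c"
proof (cases "(INF x\<in>A. f x) = \<infinity>")
  case True
  then show ?thesis using c by simp
next
  case False
  then obtain w where w: "(INF x\<in>A. f x) = ereal w" "0 < w"
    using pos by (cases "INF x\<in>A. f x") auto
  have "G \<le> w * c + e" if e: "0 < e" for e
  proof -
    define \<delta> where "\<delta> = e / (c + 1)"
    have "0 < \<delta>"
      using e c unfolding \<delta>_def by simp
    then have "(INF x\<in>A. f x) < ereal (w + \<delta>)"
      using w(1) by simp
    then obtain x where x: "x \<in> A" "f x < ereal (w + \<delta>)"
      by (auto simp: INF_less_iff)
    moreover have "ereal w \<le> f x"
      using x(1) w(1) by (metis INF_lower)
    ultimately obtain r where r: "f x = ereal r" "r < w + \<delta>"
      by (cases "f x") auto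
    have "G \<le> r * c"
      using bound x(1) r(1) .
    also have "\<dots> \<le> (w + \<delta>) * c"
      using r(2) c by (intro mult_right_mono) auto
    also have "\<dots> \<le> w * c + e"
      using e c unfolding \<delta>_def by (simp add: field_simps)
    finally show ?thesis .
  qed
  then have "G \<le> w * c"
    by (rule field_le_epsilon)
  then show ?thesis
    using w by (simp add: pos_divide_le_eq mult.commute)
qed

lemma ereal_divide_le_divide:
  fixes x y :: ereal and l G :: real
  assumes "0 < l" "0 \<le> G" "0 < x" "x * ereal l \<le> y"
  shows "ereal (l * G) / y \<le> ereal G / x"
proof (cases x)
  case (real w)
  then have w: "0 < w"
    using assms(3) by simp
  show ?thesis
  proof (cases y)
    case (real r)
    then have "w * l \<le> r"
      using assms(4) \<open>x = ereal w\<close> by simp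
    moreover have "0 < r"
      using \<open>w * l \<le> r\<close> w assms(1) by (smt (verit) mult_pos_pos)
    ultimately have "l * G / r \<le> G / w"
      using assms(2) w by (simp add: field_simps mult_left_mono)
    then show ?thesis
      using \<open>x = ereal w\<close> real \<open>0 < r\<close> w by simp
  qed (use assms(2) w \<open>x = ereal w\<close> in auto)
qed (use assms in auto)

lemma loewner_le_scaleR_density_ge_1:
  assumes "density X" "density Y" "loewner_le X (l *\<^sub>R Y)"
  shows "1 \<le> l"
  using loewner_le_trace[OF assms(3)] assms(1,2) by (simp add: trace_scaleR density_def)

lemma Rmax_ge_1: "density X \<Longrightarrow> density Y \<Longrightarrow> 1 \<le> Rmax X Y"
  unfolding Rmax_def by (rule Inf_greatest) (auto dest: loewner_le_scaleR_density_ge_1)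

lemma Rmax_le: "loewner_le X (l *\<^sub>R Y) \<Longrightarrow> Rmax X Y \<le> ereal l"
  unfolding Rmax_def by (rule Inf_lower) auto

lemma Rmax_attained:
  assumes X: "density X" and Y: "density Y" and finite: "Rmax X Y \<noteq> \<infinity>"
  shows "\<exists>a. Rmax X Y = ereal a \<and> loewner_le X (a *\<^sub>R Y)"
proof -
  define S where "S = {l. loewner_le X (l *\<^sub>R Y)}"
  have nonempty: "S \<noteq> {}"
    using finite unfolding Rmax_def S_def[symmetric] by (auto simp: top_ereal_def)
  have bdd: "bdd_below S"
    unfolding S_def using loewner_le_scaleR_density_ge_1[OF X Y] by (intro bdd_belowI) auto
  have "Inf S \<in> S"
    using closed_contains_Inf[OF nonempty bdd] closed_loewner_le_scaleR unfolding S_def by blast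
  moreover have "Rmax X Y = ereal (Inf S)"
    unfolding Rmax_def S_def[symmetric] using ereal_Inf'[OF bdd nonempty] by (simp add: image_def)
  ultimately show ?thesis
    unfolding S_def by blast
qed

lemma Rmax_le_inverse_lambda_min:
  assumes \<sigma>: "density \<sigma>" and \<rho>: "psd \<rho>" and \<lambda>: "0 < lambda_min \<rho>"
  shows "Rmax \<sigma> \<rho> \<le> ereal (1 / lambda_min \<rho>)"
proof (rule Rmax_le, unfold loewner_le_scaleR_iff, intro allI conjI)
  fix v
  have "Re (cinner v (\<sigma> *v v)) \<le> (norm v)\<^sup>2"
    using psd_quadratic_form_le_trace[of \<sigma> v] \<sigma> unfolding density_def by simp
  also have "\<dots> \<le> 1 / lambda_min \<rho> * Re (cinner v (\<rho> *v v))"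
    using lambda_min_quadratic_form_le[OF \<rho>, of v] \<lambda> by (simp add: field_simps)
  finally show "0 \<le> 1 / lambda_min \<rho> * Re (cinner v (\<rho> *v v)) - Re (cinner v (\<sigma> *v v))"
    by simp
  show "1 / lambda_min \<rho> * Im (cinner v (\<rho> *v v)) - Im (cinner v (\<sigma> *v v)) = 0"
    using \<rho> \<sigma> unfolding density_def psd_def by simp
qed

lemma OmegaF_ge_1: "free_set F \<Longrightarrow> density \<rho> \<Longrightarrow> 1 \<le> OmegaF F \<rho>"
  unfolding OmegaF_def free_set_def by (intro INF_greatest ereal_one_le_mult Rmax_ge_1) auto

lemma OmegaF_pos:
  assumes "free_set F" "density \<rho>"
  shows "0 < OmegaF F \<rho>"
  using OmegaF_ge_1[OF assms] by (cases "OmegaF F \<rho>") auto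

lemma RF_ge_1: "free_set F \<Longrightarrow> density \<rho> \<Longrightarrow> 1 \<le> RF F \<rho>"
  unfolding RF_def free_set_def by (intro INF_greatest Rmax_ge_1) auto

lemma OmegaF_mult_lambda_min_le_RF:
  assumes F: "free_set F" and \<rho>: "density \<rho>" and \<lambda>: "0 < lambda_min \<rho>"
  shows "OmegaF F \<rho> * ereal (lambda_min \<rho>) \<le> RF F \<rho>"
  unfolding RF_def
proof (rule INF_greatest)
  fix \<sigma> assume \<sigma>: "\<sigma> \<in> F"
  then have \<sigma>_density: "density \<sigma>"
    using F free_set_def by blast
  have "OmegaF F \<rho> \<le> Rmax \<rho> \<sigma> * Rmax \<sigma> \<rho>"
    unfolding OmegaF_def using \<sigma> by (rule INF_lower)
  also have "\<dots> \<le> Rmax \<rho> \<sigma> * ereal (1 / lambda_min \<rho>)"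
    using Rmax_le_inverse_lambda_min[OF \<sigma>_density _ \<lambda>] \<rho>
      order_trans[OF _ Rmax_ge_1[OF \<rho> \<sigma>_density], of 0]
    unfolding density_def by (intro ereal_mult_left_mono) auto
  finally have "OmegaF F \<rho> * ereal (lambda_min \<rho>) \<le> Rmax \<rho> \<sigma> * ereal (1 / lambda_min \<rho>) * ereal (lambda_min \<rho>)"
    using \<lambda> by (intro ereal_mult_right_mono) auto
  then show "OmegaF F \<rho> * ereal (lambda_min \<rho>) \<le> Rmax \<rho> \<sigma>"
    using \<lambda> by (simp add: mult.assoc)
qed

lemma RNG_op_output_bound:
  assumes Fin: "free_set Fin" and Fout: "free_set Fout" and \<rho>: "density \<rho>" and \<phi>: "pure_state \<phi>"
    and \<sigma>: "\<sigma> \<in> Fin" and \<rho>_le: "loewner_le \<rho> (a *\<^sub>R \<sigma>)" and \<sigma>_le: "loewner_le \<sigma> (b *\<^sub>R \<rho>)"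
    and E: "E \<in> RNG_ops Fin Fout" and t: "0 < Re (trace (E \<rho>))"
  shows "1 - FF Fout \<phi> \<le> a * b * (1 - expval \<phi> ((1 / Re (trace (E \<rho>))) *\<^sub>R E \<rho>))"
proof -
  define t where "t = Re (trace (E \<rho>))"
  define G where "G = 1 - FF Fout \<phi>"
  have cp: "completely_positive E"
    using E RNG_ops_def by blast
  obtain \<sigma>' p where \<sigma>': "\<sigma>' \<in> Fout" and p: "0 \<le> p" and E\<sigma>: "E \<sigma> = p *\<^sub>R \<sigma>'"
    using E \<sigma> unfolding RNG_ops_def by blast
  have \<sigma>'_trace: "Re (trace \<sigma>') = 1"
    using Fout \<sigma>' unfolding free_set_def density_def by simp
  have a: "1 \<le> a"
    using Fin \<sigma> \<rho> \<rho>_le loewner_le_scaleR_density_ge_1 unfolding free_set_def by blast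
  have G: "0 \<le> G" "G \<le> 1 - expval \<phi> \<sigma>'"
    unfolding G_def using FF_le_1[OF Fout \<phi>] expval_le_FF[OF Fout \<phi> \<sigma>'] by auto
  have "t \<le> a * p"
    using loewner_le_trace[OF completely_positive_loewner_mono[OF cp \<rho>_le]] \<sigma>'_trace
    unfolding completely_positive_scaleR[OF cp] E\<sigma> t_def by (simp add: trace_scaleR)
  then have "t * G \<le> a * p * G"
    using G(1) by (rule mult_right_mono)
  also have "\<dots> \<le> a * (p * (1 - expval \<phi> \<sigma>'))"
    using G(2) p a by (simp add: mult.assoc mult_left_mono)
  also have "p * (1 - expval \<phi> \<sigma>') = perp_weight \<phi> (E \<sigma>)"
    using \<sigma>'_trace unfolding E\<sigma> perp_weight_def
    by (simp add: expval_scaleR trace_scaleR algebra_simps)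
  also have "\<dots> \<le> b * perp_weight \<phi> (E \<rho>)"
    using perp_weight_mono[OF \<phi> completely_positive_loewner_mono[OF cp \<sigma>_le]]
    by (simp add: completely_positive_scaleR[OF cp] perp_weight_scaleR)
  also have "perp_weight \<phi> (E \<rho>) = t * (1 - expval \<phi> ((1 / t) *\<^sub>R E \<rho>))"
    using t unfolding t_def perp_weight_def expval_scaleR by (simp add: field_simps)
  finally have "t * G \<le> t * (a * b * (1 - expval \<phi> ((1 / t) *\<^sub>R E \<rho>)))"
    using a by (simp add: mult_left_mono mult_ac)
  then show ?thesis
    using t unfolding G_def t_def by simp
qed

lemma prob_transform_output_bound:
  assumes Fin: "free_set Fin" and Fout: "free_set Fout" and \<rho>: "density \<rho>" and \<phi>: "pure_state \<phi>"
    and \<sigma>: "\<sigma> \<in> Fin" and \<rho>_le: "loewner_le \<rho> (a *\<^sub>R \<sigma>)" and \<sigma>_le: "loewner_le \<sigma> (b *\<^sub>R \<rho>)"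
    and transform: "prob_transform Fin Fout \<rho> \<tau>"
  shows "1 - FF Fout \<phi> \<le> a * b * (1 - expval \<phi> \<tau>)"
proof -
  let ?T = "{X. 1 - FF Fout \<phi> \<le> a * b * (1 - expval \<phi> X)}"
  have "closed ?T"
    by (intro closed_Collect_le continuous_intros continuous_on_expval)
  moreover have "{(1 / Re (trace (E \<rho>))) *\<^sub>R E \<rho> | E. E \<in> RNG_ops Fin Fout \<and> Re (trace (E \<rho>)) > 0}
      \<subseteq> ?T"
    using RNG_op_output_bound[OF Fin Fout \<rho> \<phi> \<sigma> \<rho>_le \<sigma>_le] by blast
  ultimately show ?thesis
    using closure_minimal transform unfolding prob_transform_def by blast
qed

lemma FF_deficit_divide_OmegaF_le:
  assumes Fin: "free_set Fin" and Fout: "free_set Fout" and \<rho>: "density \<rho>" and \<phi>: "pure_state \<phi>"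
    and transform: "prob_transform Fin Fout \<rho> \<tau>"
    and \<tau>: "1 - \<epsilon> \<le> expval \<phi> \<tau>" and \<epsilon>: "0 \<le> \<epsilon>"
  shows "ereal (1 - FF Fout \<phi>) / OmegaF Fin \<rho> \<le> ereal \<epsilon>"
  unfolding OmegaF_def
proof (rule ereal_divide_INF_le)
  show "0 < (INF \<sigma>\<in>Fin. Rmax \<rho> \<sigma> * Rmax \<sigma> \<rho>)"
    using OmegaF_pos[OF Fin \<rho>] unfolding OmegaF_def .
  show "0 \<le> \<epsilon>"
    by (rule \<epsilon>)
  fix \<sigma> r
  assume \<sigma>: "\<sigma> \<in> Fin" and r: "Rmax \<rho> \<sigma> * Rmax \<sigma> \<rho> = ereal r"
  have \<sigma>_density: "density \<sigma>"
    using Fin \<sigma> free_set_def by blast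
  have "Rmax \<rho> \<sigma> \<noteq> \<infinity>" "Rmax \<sigma> \<rho> \<noteq> \<infinity>"
    using r Rmax_ge_1[OF \<rho> \<sigma>_density] Rmax_ge_1[OF \<sigma>_density \<rho>]
    by (cases "Rmax \<rho> \<sigma>"; cases "Rmax \<sigma> \<rho>"; simp)+
  then obtain a b where a: "Rmax \<rho> \<sigma> = ereal a" "loewner_le \<rho> (a *\<^sub>R \<sigma>)"
    and b: "Rmax \<sigma> \<rho> = ereal b" "loewner_le \<sigma> (b *\<^sub>R \<rho>)"
    using Rmax_attained \<rho> \<sigma>_density by metis
  have "1 \<le> a" "1 \<le> b"
    using loewner_le_scaleR_density_ge_1 \<rho> \<sigma>_density a(2) b(2) by blast+
  have "1 - FF Fout \<phi> \<le> a * b * (1 - expval \<phi> \<tau>)"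
    by (rule prob_transform_output_bound[OF Fin Fout \<rho> \<phi> \<sigma> a(2) b(2) transform])
  also have "\<dots> \<le> a * b * \<epsilon>"
    using \<tau> \<open>1 \<le> a\<close> \<open>1 \<le> b\<close> by (intro mult_left_mono) auto
  finally show "1 - FF Fout \<phi> \<le> r * \<epsilon>"
    using r a(1) b(1) by simp
qed

lemma lambda_min_divide_RF_le_divide_OmegaF:
  assumes F: "free_set F" and \<rho>: "density \<rho>" and G: "0 \<le> G"
  shows "ereal (lambda_min \<rho> * G) / RF F \<rho> \<le> ereal G / OmegaF F \<rho>"
proof (cases "0 < lambda_min \<rho>")
  case True
  then show ?thesis
    using ereal_divide_le_divide G OmegaF_pos[OF F \<rho>] OmegaF_mult_lambda_min_le_RF[OF F \<rho>] by blast
next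
  case False
  then have "ereal (lambda_min \<rho> * G) / RF F \<rho> \<le> 0"
    using G RF_ge_1[OF F \<rho>] mult_nonpos_nonneg[of "lambda_min \<rho>" G]
    by (cases "RF F \<rho>") (auto simp: divide_nonpos_pos)
  also have "0 \<le> ereal G / OmegaF F \<rho>"
    using G OmegaF_ge_1[OF F \<rho>] by (cases "OmegaF F \<rho>") auto
  finally show ?thesis .
qed

theorem lemma4:
  fixes Fin :: "('n::finite) cmat set" and Fout :: "('m::finite) cmat set"
    and \<rho> :: "'n cmat" and \<tau> :: "'m cmat" and \<phi> :: "complex^'m" and \<epsilon> :: real
  assumes "free_set Fin" and "free_set Fout"
    and "density \<rho>"
    and "pure_state \<phi>" and "proj \<phi> \<notin> Fout"
    and "density \<tau>"
    and "prob_transform Fin Fout \<rho> \<tau>"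
    and "fidelity \<tau> (proj \<phi>) \<ge> 1 - \<epsilon>"
  shows "ereal (1 - FF Fout \<phi>) / OmegaF Fin \<rho> \<le> ereal \<epsilon>
    \<and> ereal (lambda_min \<rho> * (1 - FF Fout \<phi>)) / RF Fin \<rho>
        \<le> ereal (1 - FF Fout \<phi>) / OmegaF Fin \<rho>"
proof -
  have \<tau>: "1 - \<epsilon> \<le> expval \<phi> \<tau>"
    using assms(6,8) fidelity_proj[OF _ assms(4)] unfolding density_def by simp
  moreover have "0 \<le> \<epsilon>"
    using \<tau> expval_le_1[OF assms(4,6)] by simp
  moreover have "0 \<le> 1 - FF Fout \<phi>"
    using FF_le_1[OF assms(2,4)] by simp
  ultimately show ?thesis
    using FF_deficit_divide_OmegaF_le[OF assms(1-4,7)]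
      lambda_min_divide_RF_le_divide_OmegaF[OF assms(1,3)] by blast
qed

end
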